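(* Let $n>1$ and let $G$ be a bipartite graph having two vertices $x$ and $y$ in the same partite set such that $N(x)$ is a proper subset of $N(y)$. Let $H=G+K_1$ and suppose $H[\overline{K_n}]$ admits a local distance antimagic labeling. Then $\chi_{ld}(H[\overline{K_{n}}])\geq 4$.
   Context: All graphs are finite, simple and undirected. $N(v)$ is the open neighborhood of $v$. For a graph $G=(V,E)$ of order $N$ without isolated vertices, a bijection $f\colon V\to\{1,2,\dots,N\}$ is a local distance antimagic labeling if $w(u)\neq w(v)$ for every edge $uv$, where $w(u)=\sum_{x\in N(u)}f(x)$. $\chi_{ld}(G)$ is the minimum number of distinct weights over all local distance antimagic labelings of $G$. $\overline{K_n}$ is the edgeless graph on $n$ vertices. $G+K_1$ is $G$ together with a new vertex adjacent to all vertices of $G$. The lexicographic product $G[H]$ has vertex set $V(G)\times V(H)$, with $(g,h)$ adjacent to $(g',h')$ iff $gg'\in E(G)$, or $g=g'$ and $hh'\in E(H)$. *)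

theory Defs
  imports Main
begin

definition simple_graph :: "'a set \<Rightarrow> ('a \<Rightarrow> 'a \<Rightarrow> bool) \<Rightarrow> bool" where
  "simple_graph V E \<longleftrightarrow> finite V \<and> (\<forall>u v. E u v \<longrightarrow> u \<in> V \<and> v \<in> V)
     \<and> (\<forall>u v. E u v \<longrightarrow> E v u) \<and> (\<forall>u. \<not> E u u)"

definition nbhd :: "'a set \<Rightarrow> ('a \<Rightarrow> 'a \<Rightarrow> bool) \<Rightarrow> 'a \<Rightarrow> 'a set" where
  "nbhd V E u = {x \<in> V. E u x}"

definition bipartition :: "'a set \<Rightarrow> ('a \<Rightarrow> 'a \<Rightarrow> bool) \<Rightarrow> 'a set \<Rightarrow> 'a set \<Rightarrow> bool" where
  "bipartition V E A B \<longleftrightarrow> A \<union> B = V \<and> A \<inter> B = {}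
     \<and> (\<forall>u\<in>A. \<forall>v\<in>A. \<not> E u v) \<and> (\<forall>u\<in>B. \<forall>v\<in>B. \<not> E u v)"

definition join_K1_V :: "'a set \<Rightarrow> 'a option set" where
  "join_K1_V V = insert None (Some ` V)"

fun join_K1_E :: "('a \<Rightarrow> 'a \<Rightarrow> bool) \<Rightarrow> 'a option \<Rightarrow> 'a option \<Rightarrow> bool" where
  "join_K1_E E (Some u) (Some v) = E u v"
| "join_K1_E E None (Some v) = True"
| "join_K1_E E (Some u) None = True"
| "join_K1_E E None None = False"

definition lex_V :: "'a set \<Rightarrow> 'b set \<Rightarrow> ('a \<times> 'b) set" where
  "lex_V VG VH = VG \<times> VH"

definition lex_E :: "('a \<Rightarrow> 'a \<Rightarrow> bool) \<Rightarrow> ('b \<Rightarrow> 'b \<Rightarrow> bool) \<Rightarrow> 'a \<times> 'b \<Rightarrow> 'a \<times> 'b \<Rightarrow> bool" where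
  "lex_E EG EH p q \<longleftrightarrow> EG (fst p) (fst q) \<or> (fst p = fst q \<and> EH (snd p) (snd q))"

definition empty_V :: "nat \<Rightarrow> nat set" where
  "empty_V n = {0..<n}"

definition empty_E :: "nat \<Rightarrow> nat \<Rightarrow> bool" where
  "empty_E u v = False"

definition ld_weight :: "'a set \<Rightarrow> ('a \<Rightarrow> 'a \<Rightarrow> bool) \<Rightarrow> ('a \<Rightarrow> nat) \<Rightarrow> 'a \<Rightarrow> nat" where
  "ld_weight V E f u = (\<Sum>x\<in>nbhd V E u. f x)"

definition ld_labeling :: "'a set \<Rightarrow> ('a \<Rightarrow> 'a \<Rightarrow> bool) \<Rightarrow> ('a \<Rightarrow> nat) \<Rightarrow> bool" where
  "ld_labeling V E f \<longleftrightarrow> bij_betw f V {1..card V}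
     \<and> (\<forall>u\<in>V. \<forall>v\<in>V. E u v \<longrightarrow> ld_weight V E f u \<noteq> ld_weight V E f v)"

definition chi_ld :: "'a set \<Rightarrow> ('a \<Rightarrow> 'a \<Rightarrow> bool) \<Rightarrow> nat" where
  "chi_ld V E = Min {card (ld_weight V E f ` V) | f. ld_labeling V E f}"

end

theory Submission
  imports Defs
begin

text \<open>In \<open>H = G + K\<^sub>1\<close> the vertex of \<open>K\<^sub>1\<close> is adjacent to every other vertex, and in
  \<open>H[\<overline>K\<^sub>n]\<close> the weight of a vertex \<open>(u, i)\<close> does not depend on \<open>i\<close>; since all labels are
  positive, a proper inclusion of neighbourhoods forces a strictly smaller weight. Hence the
  apex, \<open>x\<close> and \<open>y\<close> get three distinct weights, and a fourth comes either from a neighbour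
  \<open>b\<close> of \<open>x\<close> (adjacent to \<open>x\<close>, \<open>y\<close> and the apex) or, if \<open>x\<close> is isolated in \<open>G\<close>, from a
  neighbour \<open>z\<close> of \<open>y\<close>, whose neighbourhood in \<open>H\<close> properly contains that of \<open>x\<close>.\<close>

lemma nbhd_subset: "nbhd V E u \<subseteq> V"
  unfolding nbhd_def by blast

lemma ld_labeling_pos:
  assumes "ld_labeling V E f" "p \<in> V"
  shows "0 < f p"
  using assms unfolding ld_labeling_def bij_betw_def by fastforce

lemma ld_labeling_adjacent_weights_differ:
  assumes "ld_labeling V E f" "u \<in> V" "v \<in> V" "E u v"
  shows "ld_weight V E f u \<noteq> ld_weight V E f v"
  using assms unfolding ld_labeling_def by blast

lemma ld_weight_less_if_nbhd_psubset:
  assumes "finite V" "\<And>p. p \<in> V \<Longrightarrow> 0 < f p" "nbhd V E u \<subset> nbhd V E v"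
  shows "ld_weight V E f u < ld_weight V E f v"
proof -
  obtain t where t: "t \<in> nbhd V E v" "t \<notin> nbhd V E u"
    using assms(3) by blast
  have "0 < f t"
    using t(1) nbhd_subset[of V E v] assms(2) by blast
  moreover have "finite (nbhd V E v)"
    using finite_subset[OF nbhd_subset assms(1)] .
  ultimately show ?thesis
    unfolding ld_weight_def
    using t assms(3) by (intro sum_strict_mono2[of _ _ t]) auto
qed

lemma nbhd_lex_empty:
  "nbhd (lex_V VH (empty_V n)) (lex_E EH empty_E) (u, i) = nbhd VH EH u \<times> empty_V n"
  unfolding nbhd_def lex_V_def lex_E_def empty_E_def by auto

lemma ld_weight_lex_empty:
  "ld_weight (lex_V VH (empty_V n)) (lex_E EH empty_E) f (u, i)
     = ld_weight (lex_V VH (empty_V n)) (lex_E EH empty_E) f (u, j)"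
  unfolding ld_weight_def nbhd_lex_empty ..

lemma nbhd_join_K1_Some:
  assumes "simple_graph V E"
  shows "nbhd (join_K1_V V) (join_K1_E E) (Some u) = insert None (Some ` nbhd V E u)"
  using assms unfolding nbhd_def join_K1_V_def simple_graph_def by auto

lemma four_le_card_image:
  assumes "finite S" "a \<in> S" "b \<in> S" "c \<in> S" "d \<in> S"
    "g a \<noteq> g b" "g a \<noteq> g c" "g a \<noteq> g d" "g b \<noteq> g c" "g b \<noteq> g d" "g c \<noteq> g d"
  shows "4 \<le> card (g ` S)"
proof -
  have "card {g a, g b, g c, g d} = 4"
    using assms by simp
  moreover have "{g a, g b, g c, g d} \<subseteq> g ` S"
    using assms by auto
  ultimately show ?thesis
    using assms(1) by (metis card_mono finite_imageI)
qed

lemma chi_ld_ge: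
  assumes "finite V" "\<exists>f. ld_labeling V E f"
    and "\<And>f. ld_labeling V E f \<Longrightarrow> k \<le> card (ld_weight V E f ` V)"
  shows "k \<le> chi_ld V E"
proof -
  let ?S = "{card (ld_weight V E f ` V) | f. ld_labeling V E f}"
  have "?S \<subseteq> {..card V}"
    using card_image_le[OF assms(1)] by auto
  then have "finite ?S"
    using finite_subset by blast
  then show ?thesis
    unfolding chi_ld_def using assms(2,3) by auto
qed

lemma four_le_card_weights_join_K1:
  fixes V :: "'a set" and E :: "'a \<Rightarrow> 'a \<Rightarrow> bool" and W :: "'a option \<Rightarrow> nat"
  defines "VH \<equiv> join_K1_V V" and "EH \<equiv> join_K1_E E"
  assumes G: "simple_graph V E" and "x \<in> V" "y \<in> V" and xy: "nbhd V E x \<subset> nbhd V E y"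
    and adj: "\<And>u v. u \<in> VH \<Longrightarrow> v \<in> VH \<Longrightarrow> EH u v \<Longrightarrow> W u \<noteq> W v"
    and mono: "\<And>u v. nbhd VH EH u \<subset> nbhd VH EH v \<Longrightarrow> W u < W v"
  shows "4 \<le> card (W ` VH)"
proof -
  have VH: "finite VH" "None \<in> VH" "\<And>v. v \<in> V \<Longrightarrow> Some v \<in> VH"
    using G unfolding VH_def join_K1_V_def simple_graph_def by auto
  have nbhd_Some: "\<And>u. nbhd VH EH (Some u) = insert None (Some ` nbhd V E u)"
    unfolding VH_def EH_def using nbhd_join_K1_Some[OF G] .
  have edge: "\<And>u v. E u v \<Longrightarrow> v \<in> V \<and> E v u"
    using G unfolding simple_graph_def by blast
  have apex: "W None \<noteq> W (Some v)" if "v \<in> V" for v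
    using adj[OF VH(2) VH(3)[OF that]] by (simp add: EH_def)
  have Some_adj: "W (Some u) \<noteq> W (Some v)" if "u \<in> V" "v \<in> V" "E u v" for u v
    using adj[OF VH(3)[OF that(1)] VH(3)[OF that(2)]] that(3) by (simp add: EH_def)
  have "nbhd VH EH (Some x) \<subset> nbhd VH EH (Some y)"
    unfolding nbhd_Some using xy by (auto simp: inj_image_subset_iff)
  then have Wxy: "W (Some x) < W (Some y)"
    by (rule mono)
  show ?thesis
  proof (cases "nbhd V E x = {}")
    case False
    then obtain b where b: "E x b" "E y b"
      using xy unfolding nbhd_def by auto
    have "b \<in> V"
      using edge b(1) by blast
    show ?thesis
      using four_le_card_image[OF VH(1,2) VH(3)[OF \<open>x \<in> V\<close>] VH(3)[OF \<open>y \<in> V\<close>] VH(3)[OF \<open>b \<in> V\<close>]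
          apex[OF \<open>x \<in> V\<close>] apex[OF \<open>y \<in> V\<close>] apex[OF \<open>b \<in> V\<close>] less_imp_neq[OF Wxy]
          Some_adj[OF \<open>x \<in> V\<close> \<open>b \<in> V\<close> b(1)] Some_adj[OF \<open>y \<in> V\<close> \<open>b \<in> V\<close> b(2)]] .
  next
    case True
    obtain z where z: "E y z"
      using xy unfolding nbhd_def by auto
    then have "z \<in> V" "E z y"
      using edge by blast+
    have "nbhd VH EH (Some x) \<subset> nbhd VH EH (Some z)"
      unfolding nbhd_Some True using \<open>E z y\<close> \<open>y \<in> V\<close> unfolding nbhd_def by blast
    then have Wxz: "W (Some x) < W (Some z)"
      by (rule mono)
    show ?thesis
      using four_le_card_image[OF VH(1,2) VH(3)[OF \<open>x \<in> V\<close>] VH(3)[OF \<open>y \<in> V\<close>] VH(3)[OF \<open>z \<in> V\<close>]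
          apex[OF \<open>x \<in> V\<close>] apex[OF \<open>y \<in> V\<close>] apex[OF \<open>z \<in> V\<close>] less_imp_neq[OF Wxy]
          less_imp_neq[OF Wxz] Some_adj[OF \<open>y \<in> V\<close> \<open>z \<in> V\<close> z]] .
  qed
qed

lemma ld_labeling_lex_empty_weights:
  fixes VH :: "'a set" and EH :: "'a \<Rightarrow> 'a \<Rightarrow> bool" and n :: nat and f :: "'a \<times> nat \<Rightarrow> nat"
  defines "V' \<equiv> lex_V VH (empty_V n)" and "E' \<equiv> lex_E EH empty_E"
  defines "W \<equiv> \<lambda>u. ld_weight V' E' f (u, 0)"
  assumes "finite VH" "0 < n" and f: "ld_labeling V' E' f"
  shows "ld_weight V' E' f ` V' = W ` VH"
    and "\<And>u v. u \<in> VH \<Longrightarrow> v \<in> VH \<Longrightarrow> EH u v \<Longrightarrow> W u \<noteq> W v"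
    and "\<And>u v. nbhd VH EH u \<subset> nbhd VH EH v \<Longrightarrow> W u < W v"
proof -
  have layer: "(u, 0) \<in> V' \<longleftrightarrow> u \<in> VH" for u
    using \<open>0 < n\<close> unfolding V'_def lex_V_def empty_V_def by simp
  have "ld_weight V' E' f p = W (fst p)" for p
    unfolding W_def V'_def E'_def by (metis ld_weight_lex_empty prod.collapse)
  then have "ld_weight V' E' f ` V' = W ` fst ` V'"
    by (simp add: image_image)
  also have "fst ` V' = VH"
    using \<open>0 < n\<close> unfolding V'_def lex_V_def empty_V_def by simp
  finally show "ld_weight V' E' f ` V' = W ` VH" .
  show "W u \<noteq> W v" if "u \<in> VH" "v \<in> VH" "EH u v" for u v
    unfolding W_def using ld_labeling_adjacent_weights_differ[OF f] layer that
    by (simp add: E'_def lex_E_def)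
  show "W u < W v" if "nbhd VH EH u \<subset> nbhd VH EH v" for u v
  proof -
    have "finite V'"
      using \<open>finite VH\<close> unfolding V'_def lex_V_def empty_V_def by simp
    have "0 \<in> empty_V n"
      using \<open>0 < n\<close> unfolding empty_V_def by simp
    then have psub: "nbhd V' E' (u, 0) \<subset> nbhd V' E' (v, 0)"
      using that unfolding V'_def E'_def nbhd_lex_empty
      by (simp add: psubset_eq Times_subset_cancel2 Times_eq_cancel2)
    show ?thesis
      using ld_weight_less_if_nbhd_psubset[OF \<open>finite V'\<close> ld_labeling_pos[OF f] psub]
      unfolding W_def .
  qed
qed

text \<open>Of the hypotheses only \<open>n > 0\<close> and \<open>x, y \<in> V\<close> are needed: \<open>x\<close> and \<open>y\<close> are
  non-adjacent anyway, as \<open>N(x) \<subset> N(y)\<close> and \<open>G\<close> has no loops.\<close>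

theorem mainTheorem16:
  fixes V :: "'a set" and E :: "'a \<Rightarrow> 'a \<Rightarrow> bool" and n :: nat and x y :: 'a
  assumes "simple_graph V E"
    and "n > 1"
    and "\<exists>A B. bipartition V E A B \<and> x \<in> A \<and> y \<in> A"
    and "nbhd V E x \<subset> nbhd V E y"
    and "\<exists>f. ld_labeling (lex_V (join_K1_V V) (empty_V n))
                 (lex_E (join_K1_E E) empty_E) f"
  shows "chi_ld (lex_V (join_K1_V V) (empty_V n)) (lex_E (join_K1_E E) empty_E) \<ge> 4"
proof (rule chi_ld_ge)
  have finite: "finite (join_K1_V V)"
    using assms(1) unfolding join_K1_V_def simple_graph_def by simp
  then show "finite (lex_V (join_K1_V V) (empty_V n))"
    unfolding lex_V_def empty_V_def by simp
  have "x \<in> V" "y \<in> V"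
    using assms(3) unfolding bipartition_def by auto
  have "0 < n"
    using assms(2) by simp
  fix f
  assume "ld_labeling (lex_V (join_K1_V V) (empty_V n)) (lex_E (join_K1_E E) empty_E) f"
  note weights = ld_labeling_lex_empty_weights[OF finite \<open>0 < n\<close> this]
  show "4 \<le> card (ld_weight (lex_V (join_K1_V V) (empty_V n))
                    (lex_E (join_K1_E E) empty_E) f ` lex_V (join_K1_V V) (empty_V n))"
    unfolding weights(1)
    by (rule four_le_card_weights_join_K1[OF assms(1) \<open>x \<in> V\<close> \<open>y \<in> V\<close> assms(4) weights(2,3)])
qed (use assms(5) in blast)

end
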